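(* Let $\boldsymbol\eta$ be a standard max-stable process with generator $\mathbf Z$. Then for $f\in\bar E^-[0,1]$: (i) $P(\boldsymbol\eta>f)\ge 1-\exp\big(-E\big(\inf_{0\le t\le 1}(|f(t)|Z_t)\big)\big)$; (ii) $\displaystyle\lim_{s\downarrow 0}\frac{P(\boldsymbol\eta>sf)}{s}=E\Big(\inf_{0\le t\le 1}(|f(t)|Z_t)\Big)$.
   Context: $E[0,1]$: bounded functions on $[0,1]$ with finitely many discontinuities; $\bar E^-[0,1]=\{f\in E[0,1]:f\le 0\}$. $\boldsymbol\eta>f$ means $\eta_t>f(t)$ for all $t\in[0,1]$. A generator is a process $\mathbf Z$ with continuous nonnegative paths, $\max_t Z_t=m$ a.s. for a constant $m\in[1,\infty)$, and $E(Z_t)=1$ for all $t$. A standard max-stable process with generator $\mathbf Z$ is a process with paths in $\bar C^-[0,1]=\{f\in C[0,1]:f\le0\}$ that is max-stable (for iid copies $\boldsymbol\eta_i$ and each $n$ there are $a_n>0,b_n\in C[0,1]$ with $\boldsymbol\eta=_D\max_{i\le n}(\boldsymbol\eta_i-b_n)/a_n$ pointwise), has margins $P(\eta_t\le x)=e^x$, $x\le0$, and satisfies $P(\max_{t\in K_j}\eta_t\le x_j,1\le j\le d)=\exp(-E(\max_j|x_j|\max_{t\in K_j}Z_t))$ for all compact $K_1,\dots,K_d\subset[0,1]$ and $x_1,\dots,x_d\le 0$. *)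

theory Defs
  imports "HOL-Probability.Probability"
begin

definition E01 :: "(real \<Rightarrow> real) \<Rightarrow> bool" where
  "E01 f \<longleftrightarrow> bounded (f ` {0..1}) \<and>
     finite {t \<in> {0..1}. \<not> continuous (at t within {0..1}) f}"

definition Eneg01 :: "(real \<Rightarrow> real) \<Rightarrow> bool" where
  "Eneg01 f \<longleftrightarrow> E01 f \<and> (\<forall>t\<in>{0..1}. f t \<le> 0)"

definition generator :: "'b measure \<Rightarrow> (real \<Rightarrow> 'b \<Rightarrow> real) \<Rightarrow> bool" where
  "generator N Z \<longleftrightarrow>
     (\<forall>t\<in>{0..1}. Z t \<in> borel_measurable N) \<and>
     (\<forall>\<omega>\<in>space N. continuous_on {0..1} (\<lambda>t. Z t \<omega>) \<and> (\<forall>t\<in>{0..1}. 0 \<le> Z t \<omega>)) \<and>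
     (\<exists>m::real. 1 \<le> m \<and> (AE \<omega> in N. Sup ((\<lambda>t. Z t \<omega>) ` {0..1}) = m)) \<and>
     (\<forall>t\<in>{0..1}. integrable N (Z t) \<and> integral\<^sup>L N (Z t) = 1)"

definition path_law :: "'a measure \<Rightarrow> (real \<Rightarrow> 'a \<Rightarrow> real) \<Rightarrow> (real \<Rightarrow> real) measure" where
  "path_law M X = distr M (PiM {0..1} (\<lambda>_. borel)) (\<lambda>\<omega>. restrict (\<lambda>t. X t \<omega>) {0..1})"

text \<open>Max-stability: for iid copies \<eta>_1..\<eta>_n (realised on the n-fold product space)
  the process max_i (\<eta>_i - b_n)/a_n has the same law as \<eta>.\<close>
definition max_stable :: "'a measure \<Rightarrow> (real \<Rightarrow> 'a \<Rightarrow> real) \<Rightarrow> bool" where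
  "max_stable M \<eta> \<longleftrightarrow>
     (\<forall>n::nat. 1 \<le> n \<longrightarrow> (\<exists>a::real. \<exists>b::real \<Rightarrow> real. 0 < a \<and> continuous_on {0..1} b \<and>
        path_law M \<eta> =
        path_law (PiM {..<n} (\<lambda>_. M))
          (\<lambda>t \<omega>'. Max ((\<lambda>i. (\<eta> t (\<omega>' i) - b t) / a) ` {..<n}))))"

definition std_max_stable :: "'a measure \<Rightarrow> (real \<Rightarrow> 'a \<Rightarrow> real) \<Rightarrow> 'b measure \<Rightarrow> (real \<Rightarrow> 'b \<Rightarrow> real) \<Rightarrow> bool" where
  "std_max_stable M \<eta> N Z \<longleftrightarrow>
     prob_space M \<and> prob_space N \<and> generator N Z \<and>
     (\<forall>t\<in>{0..1}. \<eta> t \<in> borel_measurable M) \<and>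
     (\<forall>\<omega>\<in>space M. continuous_on {0..1} (\<lambda>t. \<eta> t \<omega>) \<and> (\<forall>t\<in>{0..1}. \<eta> t \<omega> \<le> 0)) \<and>
     max_stable M \<eta> \<and>
     (\<forall>t\<in>{0..1}. \<forall>x\<le>0. measure M {\<omega>\<in>space M. \<eta> t \<omega> \<le> x} = exp x) \<and>
     (\<forall>d::nat. \<forall>K::nat \<Rightarrow> real set. \<forall>x::nat \<Rightarrow> real.
        1 \<le> d \<longrightarrow> (\<forall>j<d. compact (K j) \<and> K j \<noteq> {} \<and> K j \<subseteq> {0..1} \<and> x j \<le> 0) \<longrightarrow>
        measure M {\<omega>\<in>space M. \<forall>j<d. Sup ((\<lambda>t. \<eta> t \<omega>) ` K j) \<le> x j} =
        exp (- integral\<^sup>L N (\<lambda>\<omega>. Max ((\<lambda>j. \<bar>x j\<bar> * Sup ((\<lambda>t. Z t \<omega>) ` K j)) ` {..<d}))))"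

end

theory Submission
  imports Defs
begin

(* For finitely many points t_j and weights c_j >= 0, inclusion-exclusion turns the
   finite-dimensional distributions of eta into
     P(eta(t_j) > -r c_j for all j) = Phi(r) = sum_S (-1)^|S| exp(-r E max_{j in S} c_j Z(t_j)).
   The min-max identity gives Phi'(0) = E min_j c_j Z(t_j), and since
   exp(-(r1+r2)V) = exp(-r1 V) exp(-r2 V), the function 1 - Phi is submultiplicative; hence
   1 - Phi(r) <= (1 - Phi(r/n))^n, which tends to exp(-r Phi'(0)).
   Taking the points from a countable dense set containing the discontinuities of f, the minima
   of |f| Z over finitely many points decrease to inf_t |f t| Z_t, so dominated convergence gives
   (i) and the upper bound in (ii); the lower bound in (ii) is (i) applied to s f. *)

section \<open>Inclusion-exclusion\<close>

lemma prod_one_minus_eq_sum_Pow: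
  fixes g :: "'i \<Rightarrow> real"
  assumes "finite J"
  shows "(\<Prod>j\<in>J. 1 - g j) = (\<Sum>S\<in>Pow J. (-1)^card S * (\<Prod>j\<in>S. g j))"
proof -
  have "(\<Prod>j\<in>J. 1 - g j) = (\<Prod>j\<in>J. (- g j) + 1)" by simp
  also have "\<dots> = (\<Sum>S\<in>Pow J. (\<Prod>j\<in>S. - g j) * (\<Prod>j\<in>J-S. 1))"
    by (rule prod_add[OF assms])
  also have "\<dots> = (\<Sum>S\<in>Pow J. (-1)^card S * (\<Prod>j\<in>S. g j))"
    by (intro sum.cong refl) (simp add: prod_uminus)
  finally show ?thesis .
qed

lemma sum_Pow_insert:
  fixes g :: "'i set \<Rightarrow> real"
  assumes "finite A" "x \<notin> A"
  shows "(\<Sum>S\<in>Pow (insert x A). g S) = (\<Sum>S\<in>Pow A. g S + g (insert x S))"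
proof -
  have "(\<Sum>S\<in>Pow (insert x A). g S) = (\<Sum>S\<in>Pow A. g S) + (\<Sum>S\<in>insert x ` Pow A. g S)"
    unfolding Pow_insert by (rule sum.union_disjoint) (use assms in auto)
  also have "(\<Sum>S\<in>insert x ` Pow A. g S) = (\<Sum>S\<in>Pow A. g (insert x S))"
    by (rule sum.reindex_cong[where l="insert x"]) (use assms in \<open>auto simp: inj_on_def\<close>)
  finally show ?thesis by (simp add: sum.distrib)
qed

text \<open>Min-max inclusion-exclusion: pairing each S not containing a minimiser j0 of y with
  insert j0 S cancels all terms except the one for {j0}.\<close>
lemma alternating_sum_Max_eq_Min:
  fixes y :: "'i \<Rightarrow> real"
  assumes K: "finite K" "K \<noteq> {}"
  shows "(\<Sum>S\<in>Pow K. (-1)^card S * (if S = {} then 0 else Max (y ` S))) = - Min (y ` K)"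
proof -
  obtain j0 where j0: "j0 \<in> K" "y j0 = Min (y ` K)"
    using K by (metis (mono_tags, lifting) Min_in finite_imageI image_iff image_is_empty)
  define K' where "K' = K - {j0}"
  have KK: "K = insert j0 K'" "finite K'" "j0 \<notin> K'" using j0 K by (auto simp: K'_def)
  let ?g = "\<lambda>S. (-1)^card S * (if S = {} then 0 else Max (y ` S))"
  have "(\<Sum>S\<in>Pow K. ?g S) = (\<Sum>S\<in>Pow K'. ?g S + ?g (insert j0 S))"
    unfolding KK(1) by (rule sum_Pow_insert[OF KK(2,3)])
  also have "\<dots> = (\<Sum>S\<in>Pow K'. if S = {} then - y j0 else 0)"
  proof (intro sum.cong refl)
    fix S assume S: "S \<in> Pow K'"
    have fS: "finite S" using S KK(2) finite_subset by blast
    have "j0 \<notin> S" using S KK(3) by blast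
    then have card: "card (insert j0 S) = Suc (card S)" using fS by simp
    show "?g S + ?g (insert j0 S) = (if S = {} then - y j0 else 0)"
    proof (cases "S = {}")
      case False
      then obtain j where j: "j \<in> S" by blast
      have "j \<in> K" using S j KK(1) by blast
      then have "y j0 \<le> y j" using j0 K by simp
      also have "y j \<le> Max (y ` S)" using fS j by simp
      finally have "Max (y ` insert j0 S) = Max (y ` S)"
        using fS False by (simp add: max_def)
      then show ?thesis using False card by simp
    qed simp
  qed
  also have "\<dots> = - y j0"
    by (simp add: sum.delta'[where a="{}" and S="Pow K'", simplified] KK(2))
  finally show ?thesis using j0 by simp
qed

lemma (in prob_space) prob_none_inclusion_exclusion:
  assumes J: "finite J" and A: "\<And>j. j \<in> J \<Longrightarrow> A j \<in> events"
  shows "prob {\<omega>\<in>space M. \<forall>j\<in>J. \<omega> \<notin> A j} =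
         (\<Sum>S\<in>Pow J. (-1)^card S * prob {\<omega>\<in>space M. \<forall>j\<in>S. \<omega> \<in> A j})"
proof -
  let ?none = "{\<omega>\<in>space M. \<forall>j\<in>J. \<omega> \<notin> A j}"
  let ?all = "\<lambda>S. {\<omega>\<in>space M. \<forall>j\<in>S. \<omega> \<in> A j}"
  have all_sets: "?all S \<in> events" if "S \<subseteq> J" for S
    using that A finite_subset[OF that J] by (intro sets.sets_Collect_finite_All) auto
  have "?none \<in> events"
    using A J by (intro sets.sets_Collect_finite_All) auto
  then have ind: "has_bochner_integral M (indicator ?none) (prob ?none)"
    by (intro has_bochner_integral_real_indicator) (auto simp: emeasure_eq_measure)
  have pointwise: "indicator ?none \<omega> = (\<Sum>S\<in>Pow J. (-1)^card S * indicator (?all S) \<omega> :: real)"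
    if "\<omega> \<in> space M" for \<omega>
  proof -
    have "indicator ?none \<omega> = (\<Prod>j\<in>J. 1 - indicator (A j) \<omega> :: real)"
      using that J by (simp add: indicator_def prod.neutral_const)
    also have "\<dots> = (\<Sum>S\<in>Pow J. (-1)^card S * (\<Prod>j\<in>S. indicator (A j) \<omega>))"
      by (rule prod_one_minus_eq_sum_Pow[OF J])
    also have "\<dots> = (\<Sum>S\<in>Pow J. (-1)^card S * indicator (?all S) \<omega>)"
      using that finite_subset[OF _ J] by (intro sum.cong refl) (simp add: indicator_def prod.neutral_const)
    finally show ?thesis .
  qed
  let ?sum = "\<lambda>\<omega>. \<Sum>S\<in>Pow J. (-1)^card S * indicator (?all S) \<omega> :: real"
  let ?p = "\<Sum>S\<in>Pow J. (-1)^card S * prob (?all S)"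
  have "has_bochner_integral M ?sum ?p"
    using all_sets by (intro has_bochner_integral_sum has_bochner_integral_mult_right
        has_bochner_integral_real_indicator) (auto simp: emeasure_eq_measure)
  moreover have "has_bochner_integral M (indicator ?none) ?p \<longleftrightarrow> has_bochner_integral M ?sum ?p"
    using pointwise by (intro has_bochner_integral_cong) auto
  ultimately show ?thesis
    using has_bochner_integral_eq[OF ind] by blast
qed

section \<open>Submultiplicative survival functions\<close>

lemma one_minus_le_pow_of_submult:
  fixes \<phi> :: "real \<Rightarrow> real"
  assumes zero: "\<phi> 0 = 0" and le_1: "\<And>u. 0 \<le> u \<Longrightarrow> \<phi> u \<le> 1"
    and submult: "\<And>a b. 0 \<le> a \<Longrightarrow> 0 \<le> b \<Longrightarrow> 1 - \<phi> (a + b) \<le> (1 - \<phi> a) * (1 - \<phi> b)"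
    and u: "0 \<le> u"
  shows "1 - \<phi> (real n * u) \<le> (1 - \<phi> u) ^ n"
proof (induction n)
  case 0
  then show ?case by (simp add: zero)
next
  case (Suc n)
  have "1 - \<phi> (real (Suc n) * u) = 1 - \<phi> (real n * u + u)" by (simp add: algebra_simps)
  also have "\<dots> \<le> (1 - \<phi> (real n * u)) * (1 - \<phi> u)" by (rule submult) (use u in simp_all)
  also have "\<dots> \<le> (1 - \<phi> u) ^ n * (1 - \<phi> u)"
    by (rule mult_right_mono[OF Suc]) (use le_1[OF u] in simp)
  finally show ?case by (simp add: mult.commute)
qed

text \<open>Splitting r into n equal pieces: 1 - \<phi> r \<le> (1 - \<phi>(r/n))^n \<le> exp(-n \<phi>(r/n)),
  and n \<phi>(r/n) \<longrightarrow> r l.\<close>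
lemma exp_lower_bound_of_submult:
  fixes \<phi> :: "real \<Rightarrow> real"
  assumes zero: "\<phi> 0 = 0" and le_1: "\<And>u. 0 \<le> u \<Longrightarrow> \<phi> u \<le> 1"
    and submult: "\<And>a b. 0 \<le> a \<Longrightarrow> 0 \<le> b \<Longrightarrow> 1 - \<phi> (a + b) \<le> (1 - \<phi> a) * (1 - \<phi> b)"
    and quotient: "((\<lambda>r. \<phi> r / r) \<longlongrightarrow> l) (at_right 0)"
    and r: "0 \<le> r"
  shows "1 - exp (- (r * l)) \<le> \<phi> r"
proof (cases "r = 0")
  case True
  then show ?thesis by (simp add: zero)
next
  case False
  with r have r: "0 < r" by simp
  have bound: "1 - \<phi> r \<le> exp (- (real n * \<phi> (r / real n)))" if n: "n \<ge> 1" for n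
  proof -
    have u: "0 \<le> r / real n" using r by simp
    have "1 - \<phi> r = 1 - \<phi> (real n * (r / real n))" using n by simp
    also have "\<dots> \<le> (1 - \<phi> (r / real n)) ^ n"
      by (rule one_minus_le_pow_of_submult[OF zero le_1 submult u])
    also have "\<dots> \<le> (exp (- \<phi> (r / real n))) ^ n"
      by (rule power_mono) (use le_1[OF u] exp_ge_add_one_self[of "- \<phi> (r / real n)"] in auto)
    also have "\<dots> = exp (- (real n * \<phi> (r / real n)))" by (simp add: exp_of_nat_mult[symmetric])
    finally show ?thesis .
  qed
  have "filterlim (\<lambda>n::nat. r / real n) (at_right 0) sequentially"
  proof -
    have "(\<lambda>n::nat. r / real n) \<longlonglongrightarrow> 0"
      by (intro tendsto_divide_0[OF tendsto_const] filterlim_at_top_imp_at_infinity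
          filterlim_real_sequentially)
    moreover have "eventually (\<lambda>n. r / real n \<in> {0<..} \<and> r / real n \<noteq> 0) sequentially"
      using eventually_gt_at_top[of "0::nat"] by eventually_elim (use r in auto)
    ultimately show ?thesis by (simp add: filterlim_at)
  qed
  then have "((\<lambda>n::nat. r * (\<phi> (r / real n) / (r / real n))) \<longlongrightarrow> r * l) sequentially"
    by (intro tendsto_mult tendsto_const filterlim_compose[OF quotient])
  moreover have "eventually (\<lambda>n::nat. r * (\<phi> (r / real n) / (r / real n)) = real n * \<phi> (r / real n))
      sequentially"
    using eventually_gt_at_top[of "0::nat"] by eventually_elim (use r in auto)
  ultimately have "((\<lambda>n::nat. real n * \<phi> (r / real n)) \<longlongrightarrow> r * l) sequentially"
    by (rule Lim_transform_eventually)
  then have "((\<lambda>n::nat. exp (- (real n * \<phi> (r / real n)))) \<longlongrightarrow> exp (- (r * l))) sequentially"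
    by (intro tendsto_exp tendsto_minus)
  moreover have "eventually (\<lambda>n. 1 - \<phi> r \<le> exp (- (real n * \<phi> (r / real n)))) sequentially"
    using eventually_ge_at_top[of "1::nat"] by eventually_elim (rule bound)
  ultimately have "1 - \<phi> r \<le> exp (- (r * l))"
    by (intro tendsto_lowerbound) auto
  then show ?thesis by simp
qed

lemma one_minus_exp_quotient_tendsto:
  "((\<lambda>s. (1 - exp (- (s * l))) / s) \<longlongrightarrow> (l::real)) (at_right 0)"
proof -
  have "((\<lambda>s. 1 - exp (- (s * l))) has_real_derivative l) (at 0)"
    by (auto intro!: derivative_eq_intros)
  then have "((\<lambda>s. (1 - exp (- (s * l))) / s) \<longlongrightarrow> l) (at 0)"
    by (simp add: DERIV_def)
  then show ?thesis by (rule tendsto_mono[OF at_le, rotated]) simp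
qed

section \<open>Measurability of strict inequalities along paths\<close>

lemma le_of_le_on_rationals_near:
  fixes h :: "real \<Rightarrow> real"
  assumes t: "t \<in> {0..1}" and cont: "continuous (at t within {0..1}) h" and \<delta>: "0 < \<delta>"
    and le: "\<And>q. q \<in> \<rat> \<Longrightarrow> q \<in> {0..1} \<Longrightarrow> \<bar>q - t\<bar> < \<delta> \<Longrightarrow> c \<le> h q"
  shows "c \<le> h t"
proof (rule ccontr)
  assume "\<not> c \<le> h t"
  then obtain \<epsilon> where \<epsilon>: "0 < \<epsilon>" "\<And>x. x \<in> {0..1} \<Longrightarrow> dist x t < \<epsilon> \<Longrightarrow> dist (h x) (h t) < c - h t"
    using cont unfolding continuous_within_eps_delta by (metis diff_gt_0_iff_gt not_le)
  have "max 0 (t - min \<epsilon> \<delta>) < min 1 (t + min \<epsilon> \<delta>)" using t \<epsilon>(1) \<delta> by auto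
  then obtain q where q: "q \<in> \<rat>" "max 0 (t - min \<epsilon> \<delta>) < q" "q < min 1 (t + min \<epsilon> \<delta>)"
    using Rats_dense_in_real by blast
  then have "q \<in> {0..1}" "\<bar>q - t\<bar> < \<delta>" "dist q t < \<epsilon>" by (auto simp: dist_real_def)
  then have "c \<le> h q" "dist (h q) (h t) < c - h t" using le q(1) \<epsilon>(2) by auto
  then show False by (simp add: dist_real_def)
qed

lemma compact_pos_imp_uniform_gap:
  fixes h :: "real \<Rightarrow> real"
  assumes U: "compact U" and cont: "continuous_on U h" and pos: "\<And>t. t \<in> U \<Longrightarrow> 0 < h t"
  shows "\<exists>k::nat. \<forall>t\<in>U. 1 / (real k + 1) \<le> h t"
proof (cases "U = {}")
  case False
  obtain t0 where t0: "t0 \<in> U" "\<And>t. t \<in> U \<Longrightarrow> h t0 \<le> h t"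
    using continuous_attains_inf[OF U False cont] by blast
  obtain k where "inverse (real (Suc k)) < h t0"
    using reals_Archimedean pos[OF t0(1)] by blast
  then have "\<forall>t\<in>U. 1 / (real k + 1) \<le> h t"
    using t0(2) by (auto simp: inverse_eq_divide add.commute intro: order_trans[OF less_imp_le])
  then show ?thesis ..
qed simp

definition rats_apart :: "real set \<Rightarrow> nat \<Rightarrow> real set" where
  "rats_apart F n = {q\<in>\<rat>. q \<in> {0..1} \<and> (\<forall>u\<in>F. 1 / (real n + 1) < \<bar>q - u\<bar>)}"

lemma countable_rats_apart: "countable (rats_apart F n)"
  by (rule countable_subset[OF _ countable_rat]) (auto simp: rats_apart_def)

lemma uniform_gap_on_rats_apart:
  fixes g p :: "real \<Rightarrow> real"
  assumes cont_p: "continuous_on {0..1} p"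
    and cont_g: "\<And>t. t \<in> {0..1} \<Longrightarrow> t \<notin> F \<Longrightarrow> continuous (at t within {0..1}) g"
    and less: "\<And>t. t \<in> {0..1} \<Longrightarrow> g t < p t"
  shows "\<exists>k::nat. \<forall>q\<in>rats_apart F n. g q + 1 / (real k + 1) \<le> p q"
proof -
  define U where "U = {0..1} \<inter> (\<Inter>u\<in>F. {t. 1 / (real n + 1) \<le> \<bar>t - u\<bar>})"
  have sub: "rats_apart F n \<subseteq> U" by (force simp: U_def rats_apart_def)
  have U_avoids: "t \<in> {0..1}" "t \<notin> F" if "t \<in> U" for t
    using that by (force simp: U_def)+
  have "closed (\<Inter>u\<in>F. {t. 1 / (real n + 1) \<le> \<bar>t - u\<bar>})"
    by (intro closed_INT ballI closed_Collect_le continuous_intros)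
  then have "compact U" unfolding U_def by (intro compact_Int_closed) auto
  moreover have "continuous_on U (\<lambda>t. p t - g t)"
    unfolding continuous_on_eq_continuous_within
  proof
    fix t assume t: "t \<in> U"
    have "continuous (at t within {0..1}) (\<lambda>t. p t - g t)"
      using cont_p cont_g U_avoids[OF t]
      by (intro continuous_intros) (auto simp: continuous_on_eq_continuous_within)
    then show "continuous (at t within U) (\<lambda>t. p t - g t)"
      by (rule continuous_within_subset) (auto simp: U_def)
  qed
  ultimately obtain k :: nat where "\<forall>t\<in>U. 1 / (real k + 1) \<le> p t - g t"
    using compact_pos_imp_uniform_gap less U_avoids by force
  then show ?thesis using sub by (intro exI[of _ k]) force
qed

lemma less_of_uniform_gap_on_rats_apart:
  fixes g p :: "real \<Rightarrow> real"
  assumes F: "finite F" and cont_p: "continuous_on {0..1} p"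
    and cont_g: "\<And>t. t \<in> {0..1} \<Longrightarrow> t \<notin> F \<Longrightarrow> continuous (at t within {0..1}) g"
    and less_on_F: "\<And>t. t \<in> {0..1} \<Longrightarrow> t \<in> F \<Longrightarrow> g t < p t"
    and gap: "\<And>n. \<exists>k::nat. \<forall>q\<in>rats_apart F n. g q + 1 / (real k + 1) \<le> p q"
    and t: "t \<in> {0..1}"
  shows "g t < p t"
proof (cases "t \<in> F")
  case False
  obtain \<delta> where \<delta>: "0 < \<delta>" "\<forall>u\<in>F. u \<noteq> t \<longrightarrow> \<delta> \<le> dist t u"
    using finite_set_avoid[OF F] by blast
  obtain n :: nat where n: "1 / (real n + 1) < \<delta> / 2"
    using reals_Archimedean[of "\<delta> / 2"] \<delta>(1) by (auto simp: inverse_eq_divide add.commute)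
  obtain k :: nat where k: "\<And>q. q \<in> rats_apart F n \<Longrightarrow> g q + 1 / (real k + 1) \<le> p q"
    using gap by blast
  have "1 / (real k + 1) \<le> p t - g t"
  proof (rule le_of_le_on_rationals_near[OF t _ half_gt_zero[OF \<delta>(1)]])
    show "continuous (at t within {0..1}) (\<lambda>t. p t - g t)"
      using cont_p cont_g[OF t False] t
      by (intro continuous_intros) (auto simp: continuous_on_eq_continuous_within)
  next
    fix q assume q: "q \<in> \<rat>" "q \<in> {0..1}" "\<bar>q - t\<bar> < \<delta> / 2"
    have "1 / (real n + 1) < \<bar>q - u\<bar>" if "u \<in> F" for u
    proof -
      have "\<delta> \<le> \<bar>t - u\<bar>" using \<delta>(2) that False by (auto simp: dist_real_def)
      then show ?thesis using q(3) n by linarith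
    qed
    then have "q \<in> rats_apart F n" using q by (simp add: rats_apart_def)
    then show "1 / (real k + 1) \<le> p q - g q" using k by force
  qed
  moreover have "0 < 1 / (real k + 1)" by simp
  ultimately show ?thesis by linarith
qed (use less_on_F t in blast)

text \<open>Strict inequality along a path need not be uniform near the discontinuities of g, hence
  the exceptional points are treated individually and their neighbourhoods excised.\<close>
lemma sets_Collect_strict_above:
  fixes g :: "real \<Rightarrow> real" and X :: "real \<Rightarrow> 'a \<Rightarrow> real"
  assumes F: "finite F"
    and meas: "\<And>t. t \<in> {0..1} \<Longrightarrow> X t \<in> borel_measurable M"
    and cont_X: "\<And>\<omega>. \<omega> \<in> space M \<Longrightarrow> continuous_on {0..1} (\<lambda>t. X t \<omega>)"
    and cont_g: "\<And>t. t \<in> {0..1} \<Longrightarrow> t \<notin> F \<Longrightarrow> continuous (at t within {0..1}) g"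
  shows "{\<omega>\<in>space M. \<forall>t\<in>{0..1}. g t < X t \<omega>} \<in> sets M"
proof -
  have "{\<omega>\<in>space M. \<forall>t\<in>{0..1}. g t < X t \<omega>} =
      {\<omega>\<in>space M. (\<forall>t\<in>F \<inter> {0..1}. g t < X t \<omega>) \<and>
        (\<forall>n. \<exists>k::nat. \<forall>q\<in>rats_apart F n. g q + 1 / (real k + 1) \<le> X q \<omega>)}"
    using uniform_gap_on_rats_apart[OF cont_X cont_g] less_of_uniform_gap_on_rats_apart[OF F cont_X cont_g]
    by blast
  also have "\<dots> \<in> sets M"
  proof (intro sets.sets_Collect_conj sets.sets_Collect_countable_All' sets.sets_Collect_countable_All
      sets.sets_Collect_countable_Ex)
    fix t q :: real and k :: nat and c :: real
    assume "t \<in> F \<inter> {0..1}"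
    then have [measurable]: "X t \<in> borel_measurable M" using meas by blast
    show "{\<omega>\<in>space M. g t < X t \<omega>} \<in> sets M" by measurable
  next
    fix n k q assume "q \<in> rats_apart F n"
    then have [measurable]: "X q \<in> borel_measurable M" using meas by (auto simp: rats_apart_def)
    show "{\<omega>\<in>space M. g q + 1 / (real k + 1) \<le> X q \<omega>} \<in> sets M" by measurable
  qed (use F countable_rats_apart in \<open>auto intro: countable_finite\<close>)
  finally show ?thesis .
qed

section \<open>Finite-dimensional distributions\<close>

locale std_max_stable_process =
  fixes M :: "'a measure" and \<eta> :: "real \<Rightarrow> 'a \<Rightarrow> real"
    and N :: "'b measure" and Z :: "real \<Rightarrow> 'b \<Rightarrow> real"
  assumes std_max_stable: "std_max_stable M \<eta> N Z"
begin

lemma prob_space_M: "prob_space M"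
  using std_max_stable by (simp add: std_max_stable_def)

sublocale prob_space M
  by (rule prob_space_M)

lemma eta_measurable: "t \<in> {0..1} \<Longrightarrow> \<eta> t \<in> borel_measurable M"
  using std_max_stable by (simp add: std_max_stable_def)

lemma continuous_on_eta: "\<omega> \<in> space M \<Longrightarrow> continuous_on {0..1} (\<lambda>t. \<eta> t \<omega>)"
  using std_max_stable by (simp add: std_max_stable_def)

lemma eta_nonpos: "\<omega> \<in> space M \<Longrightarrow> t \<in> {0..1} \<Longrightarrow> \<eta> t \<omega> \<le> 0"
  using std_max_stable by (simp add: std_max_stable_def)

lemma integrable_Z: "t \<in> {0..1} \<Longrightarrow> integrable N (Z t)"
  using std_max_stable by (simp add: std_max_stable_def generator_def)

lemma continuous_on_Z: "\<omega> \<in> space N \<Longrightarrow> continuous_on {0..1} (\<lambda>t. Z t \<omega>)"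
  using std_max_stable by (simp add: std_max_stable_def generator_def)

lemma Z_nonneg: "\<omega> \<in> space N \<Longrightarrow> t \<in> {0..1} \<Longrightarrow> 0 \<le> Z t \<omega>"
  using std_max_stable by (simp add: std_max_stable_def generator_def)

text \<open>The defining formula of a standard max-stable process for the singletons K_i = {t (e i)},
  where e enumerates S.\<close>
lemma prob_eta_le_at_points:
  assumes S: "finite S" "S \<noteq> {}"
    and t: "\<And>j. j \<in> S \<Longrightarrow> t j \<in> {0..1}" and x: "\<And>j. j \<in> S \<Longrightarrow> x j \<le> 0"
  shows "prob {\<omega>\<in>space M. \<forall>j\<in>S. \<eta> (t j) \<omega> \<le> x j} =
         exp (- integral\<^sup>L N (\<lambda>\<omega>. Max ((\<lambda>j. \<bar>x j\<bar> * Z (t j) \<omega>) ` S)))"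
proof -
  obtain e where "bij_betw e {0..<card S} S" using ex_bij_betw_nat_finite[OF S(1)] by blast
  then have e_image: "e ` {..<card S} = S" by (simp add: bij_betw_def lessThan_atLeast0)
  have e_in: "e i \<in> S" if "i < card S" for i using e_image that by blast
  have e_onto: "\<exists>i<card S. e i = j" if "j \<in> S" for j using e_image that by (metis imageE lessThan_iff)
  have "1 \<le> card S" using S by (simp add: Suc_le_eq card_gt_0_iff)
  then have "prob {\<omega>\<in>space M. \<forall>i<card S. Sup ((\<lambda>s. \<eta> s \<omega>) ` {t (e i)}) \<le> x (e i)} =
      exp (- integral\<^sup>L N (\<lambda>\<omega>. Max ((\<lambda>i. \<bar>x (e i)\<bar> * Sup ((\<lambda>s. Z s \<omega>) ` {t (e i)})) ` {..<card S})))"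
    using std_max_stable e_in t x unfolding std_max_stable_def
    by (elim conjE allE[of _ "card S"] allE[of _ "\<lambda>i. {t (e i)}"] allE[of _ "\<lambda>i. x (e i)"]) auto
  moreover have "{\<omega>\<in>space M. \<forall>i<card S. Sup ((\<lambda>s. \<eta> s \<omega>) ` {t (e i)}) \<le> x (e i)} =
      {\<omega>\<in>space M. \<forall>j\<in>S. \<eta> (t j) \<omega> \<le> x j}"
    using e_in e_onto by fastforce
  moreover have "(\<lambda>i. \<bar>x (e i)\<bar> * Sup ((\<lambda>s. Z s \<omega>) ` {t (e i)})) ` {..<card S} =
      (\<lambda>j. \<bar>x j\<bar> * Z (t j) \<omega>) ` S" for \<omega>
  proof -
    have "(\<lambda>i. \<bar>x (e i)\<bar> * Sup ((\<lambda>s. Z s \<omega>) ` {t (e i)})) ` {..<card S} =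
        (\<lambda>j. \<bar>x j\<bar> * Z (t j) \<omega>) ` (e ` {..<card S})"
      by (simp add: image_image)
    then show ?thesis by (simp only: e_image)
  qed
  ultimately show ?thesis by simp
qed

end

locale std_max_stable_fidi = std_max_stable_process +
  fixes t :: "nat \<Rightarrow> real" and c :: "nat \<Rightarrow> real" and K :: "nat set"
  assumes finite_K: "finite K" and K_ne: "K \<noteq> {}"
    and t_in: "\<And>j. j \<in> K \<Longrightarrow> t j \<in> {0..1}"
    and c_nonneg: "\<And>j. j \<in> K \<Longrightarrow> 0 \<le> c j"
begin

definition below :: "real \<Rightarrow> nat \<Rightarrow> 'a set" where
  "below r j = {\<omega>\<in>space M. \<eta> (t j) \<omega> \<le> - r * c j}"

definition above :: "real \<Rightarrow> 'a set" where
  "above r = {\<omega>\<in>space M. \<forall>j\<in>K. - r * c j < \<eta> (t j) \<omega>}"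

definition hits :: "real \<Rightarrow> 'a \<Rightarrow> nat set" where
  "hits r \<omega> = {j\<in>K. \<omega> \<in> below r j}"

definition max_mean :: "nat set \<Rightarrow> real" where
  "max_mean S = integral\<^sup>L N (\<lambda>\<omega>. if S = {} then 0 else Max ((\<lambda>j. c j * Z (t j) \<omega>) ` S))"

definition min_mean :: real where
  "min_mean = integral\<^sup>L N (\<lambda>\<omega>. Min ((\<lambda>j. c j * Z (t j) \<omega>) ` K))"

text \<open>For r \<ge> 0 this is prob (above r) (see prob_above_eq_Phi); the closed formula extends it to
  all r, so that it can be differentiated at 0.\<close>
definition Phi :: "real \<Rightarrow> real" where
  "Phi r = (\<Sum>S\<in>Pow K. (-1)^card S * exp (- r * max_mean S))"

lemma below_sets: "j \<in> K \<Longrightarrow> below r j \<in> events"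
  using eta_measurable[OF t_in] unfolding below_def by measurable

lemma above_eq: "above r = {\<omega>\<in>space M. \<forall>j\<in>K. \<omega> \<notin> below r j}"
  unfolding above_def below_def by auto

lemma above_sets: "above r \<in> events"
  unfolding above_eq using finite_K below_sets
  by (intro sets.sets_Collect_finite_All) (auto simp: below_def)

lemma prob_below_all:
  assumes S: "S \<subseteq> K" and r: "0 \<le> r"
  shows "prob {\<omega>\<in>space M. \<forall>j\<in>S. \<omega> \<in> below r j} = exp (- r * max_mean S)"
proof (cases "S = {}")
  case True
  then show ?thesis by (simp add: max_mean_def prob_space)
next
  case False
  have fS: "finite S" using S finite_K finite_subset by blast
  have Max_scale: "Max ((\<lambda>j. \<bar>- r * c j\<bar> * Z (t j) \<omega>) ` S) = r * Max ((\<lambda>j. c j * Z (t j) \<omega>) ` S)"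
    for \<omega>
  proof -
    have "(\<lambda>j. \<bar>- r * c j\<bar> * Z (t j) \<omega>) ` S = (\<lambda>u. r * u) ` ((\<lambda>j. c j * Z (t j) \<omega>) ` S)"
      using S c_nonneg r by (auto simp: image_image abs_mult intro!: image_cong)
    also have "Max \<dots> = r * Max ((\<lambda>j. c j * Z (t j) \<omega>) ` S)"
      by (rule hom_Max_commute[symmetric]) (use fS False r in \<open>auto simp: max_mult_distrib_left\<close>)
    finally show ?thesis .
  qed
  have "{\<omega>\<in>space M. \<forall>j\<in>S. \<omega> \<in> below r j} = {\<omega>\<in>space M. \<forall>j\<in>S. \<eta> (t j) \<omega> \<le> - r * c j}"
    unfolding below_def by auto
  also have "prob \<dots> = exp (- integral\<^sup>L N (\<lambda>\<omega>. Max ((\<lambda>j. \<bar>- r * c j\<bar> * Z (t j) \<omega>) ` S)))"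
    by (rule prob_eta_le_at_points[OF fS False]) (use S t_in c_nonneg r in auto)
  also have "\<dots> = exp (- integral\<^sup>L N (\<lambda>\<omega>. r * Max ((\<lambda>j. c j * Z (t j) \<omega>) ` S)))"
    by (simp only: Max_scale)
  also have "\<dots> = exp (- r * max_mean S)"
    using False by (simp add: max_mean_def)
  finally show ?thesis .
qed

lemma prob_none_below:
  assumes J: "J \<subseteq> K" and r: "0 \<le> r"
  shows "prob {\<omega>\<in>space M. \<forall>j\<in>J. \<omega> \<notin> below r j} =
         (\<Sum>S\<in>Pow J. (-1)^card S * exp (- r * max_mean S))"
proof -
  have "prob {\<omega>\<in>space M. \<forall>j\<in>J. \<omega> \<notin> below r j} =
      (\<Sum>S\<in>Pow J. (-1)^card S * prob {\<omega>\<in>space M. \<forall>j\<in>S. \<omega> \<in> below r j})"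
    using J finite_subset[OF J finite_K] below_sets by (intro prob_none_inclusion_exclusion) auto
  also have "\<dots> = (\<Sum>S\<in>Pow J. (-1)^card S * exp (- r * max_mean S))"
    using J r by (intro sum.cong refl) (auto simp: prob_below_all)
  finally show ?thesis .
qed

lemma prob_above_eq_Phi: "0 \<le> r \<Longrightarrow> prob (above r) = Phi r"
  unfolding above_eq Phi_def by (rule prob_none_below) simp

lemma Phi_0: "Phi 0 = 0"
proof -
  obtain j where "j \<in> K" using K_ne by blast
  then have "above 0 = {}" using eta_nonpos t_in by (force simp: above_def)
  then show ?thesis using prob_above_eq_Phi[of 0] by simp
qed

lemma Phi_le_1: "0 \<le> r \<Longrightarrow> Phi r \<le> 1"
  using prob_above_eq_Phi[of r] prob_le_1[of "above r"] by simp

lemma alternating_sum_max_mean: "(\<Sum>S\<in>Pow K. (-1)^card S * max_mean S) = - min_mean"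
proof -
  let ?max = "\<lambda>S \<omega>. if S = {} then 0 else Max ((\<lambda>j. c j * Z (t j) \<omega>) ` S)"
  have "integrable N (?max S)" if "S \<subseteq> K" for S
    using that finite_subset[OF that finite_K] t_in
    by (cases "S = {}") (auto intro!: integrable_MAX integrable_mult_right integrable_Z)
  then have "(\<Sum>S\<in>Pow K. (-1)^card S * max_mean S) =
      integral\<^sup>L N (\<lambda>\<omega>. \<Sum>S\<in>Pow K. (-1)^card S * ?max S \<omega>)"
    unfolding max_mean_def by (subst Bochner_Integration.integral_sum) auto
  also have "\<dots> = integral\<^sup>L N (\<lambda>\<omega>. - Min ((\<lambda>j. c j * Z (t j) \<omega>) ` K))"
    by (intro Bochner_Integration.integral_cong refl alternating_sum_Max_eq_Min finite_K K_ne)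
  finally show ?thesis by (simp add: min_mean_def)
qed

lemma Phi_has_real_derivative: "(Phi has_real_derivative min_mean) (at 0)"
proof -
  have "(Phi has_real_derivative (\<Sum>S\<in>Pow K. (-1)^card S * (exp (- 0 * max_mean S) * (- max_mean S))))
      (at 0)"
    unfolding Phi_def by (intro DERIV_sum DERIV_cmult) (auto intro!: derivative_eq_intros)
  then show ?thesis
    using alternating_sum_max_mean by (simp add: sum_negf)
qed

lemma Phi_quotient_tendsto: "((\<lambda>r. Phi r / r) \<longlongrightarrow> min_mean) (at_right 0)"
proof -
  have "((\<lambda>r. (Phi (0 + r) - Phi 0) / r) \<longlongrightarrow> min_mean) (at 0)"
    using Phi_has_real_derivative by (simp add: DERIV_def)
  then have "((\<lambda>r. Phi r / r) \<longlongrightarrow> min_mean) (at 0)" by (simp add: Phi_0)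
  then show ?thesis by (rule tendsto_mono[OF at_le, rotated]) simp
qed

text \<open>Writing exp(-(r1+r2)V) = exp(-r1 V) exp(-r2 V) and expanding the first factor by
  inclusion-exclusion, Phi(r1+r2) is the expectation of the probability that none of the
  hit thresholds at level r1 is hit again at level r2.\<close>
lemma has_bochner_integral_prob_none_below_hits:
  assumes r1: "0 \<le> r1" and r2: "0 \<le> r2"
  shows "has_bochner_integral M (\<lambda>\<omega>. prob {\<omega>'\<in>space M. \<forall>j\<in>hits r1 \<omega>. \<omega>' \<notin> below r2 j})
           (Phi (r1 + r2))"
proof -
  let ?e = "\<lambda>S. (-1)^card S * exp (- r2 * max_mean S)"
  let ?all = "\<lambda>S. {\<omega>\<in>space M. \<forall>j\<in>S. \<omega> \<in> below r1 j}"
  have all_sets: "?all S \<in> events" if "S \<subseteq> K" for S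
    using that finite_subset[OF that finite_K] below_sets
    by (intro sets.sets_Collect_finite_All) (auto simp: below_def)
  have "Phi (r1 + r2) = (\<Sum>S\<in>Pow K. ?e S * prob (?all S))"
    unfolding Phi_def
    by (intro sum.cong refl) (auto simp: prob_below_all r1 algebra_simps exp_add[symmetric])
  moreover have "has_bochner_integral M (\<lambda>\<omega>. \<Sum>S\<in>Pow K. ?e S * indicator (?all S) \<omega>)
      (\<Sum>S\<in>Pow K. ?e S * prob (?all S))"
    using all_sets by (intro has_bochner_integral_sum has_bochner_integral_mult_right
        has_bochner_integral_real_indicator) (auto simp: emeasure_eq_measure)
  moreover have "(\<Sum>S\<in>Pow K. ?e S * indicator (?all S) \<omega>) =
      prob {\<omega>'\<in>space M. \<forall>j\<in>hits r1 \<omega>. \<omega>' \<notin> below r2 j}" if \<omega>: "\<omega> \<in> space M" for \<omega>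
  proof -
    have hits_K: "hits r1 \<omega> \<subseteq> K" by (auto simp: hits_def)
    have "(\<Sum>S\<in>Pow K. ?e S * indicator (?all S) \<omega>) = (\<Sum>S\<in>Pow K. if S \<in> Pow (hits r1 \<omega>) then ?e S else 0)"
      by (intro sum.cong refl) (use \<omega> in \<open>auto simp: hits_def indicator_def\<close>)
    also have "\<dots> = (\<Sum>S\<in>Pow K \<inter> Pow (hits r1 \<omega>). ?e S)"
      by (rule sum.inter_restrict[symmetric]) (simp add: finite_K)
    also have "\<dots> = (\<Sum>S\<in>Pow (hits r1 \<omega>). ?e S)"
      by (simp only: Int_absorb1[OF Pow_mono[OF hits_K]])
    also have "\<dots> = prob {\<omega>'\<in>space M. \<forall>j\<in>hits r1 \<omega>. \<omega>' \<notin> below r2 j}"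
      by (rule prob_none_below[OF hits_K r2, symmetric])
    finally show ?thesis .
  qed
  ultimately show ?thesis
    by (simp cong: has_bochner_integral_cong)
qed

lemma one_minus_Phi_add_le:
  assumes r1: "0 \<le> r1" and r2: "0 \<le> r2"
  shows "1 - Phi (r1 + r2) \<le> (1 - Phi r1) * (1 - Phi r2)"
proof -
  let ?q = "\<lambda>\<omega>. prob {\<omega>'\<in>space M. \<forall>j\<in>hits r1 \<omega>. \<omega>' \<notin> below r2 j}"
  have lower: "Phi r2 + (1 - Phi r2) * indicator (above r1) \<omega> \<le> ?q \<omega>" if \<omega>: "\<omega> \<in> space M" for \<omega>
  proof (cases "\<omega> \<in> above r1")
    case True
    then have "hits r1 \<omega> = {}" by (auto simp: above_eq hits_def)
    then show ?thesis using True by (simp add: prob_space)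
  next
    case False
    have "Phi r2 = prob {\<omega>'\<in>space M. \<forall>j\<in>K. \<omega>' \<notin> below r2 j}"
      using prob_above_eq_Phi[OF r2] by (simp add: above_eq)
    also have "\<dots> \<le> ?q \<omega>"
      using finite_subset[of "hits r1 \<omega>" K] finite_K below_sets
      by (intro finite_measure_mono sets.sets_Collect_finite_All) (auto simp: hits_def below_def)
    finally show ?thesis using False by simp
  qed
  have "Phi r2 + (1 - Phi r2) * Phi r1 =
      expectation (\<lambda>\<omega>. Phi r2 + (1 - Phi r2) * indicator (above r1) \<omega>)"
    using above_sets prob_above_eq_Phi[OF r1]
    by (subst Bochner_Integration.integral_add)
       (auto intro!: integrable_real_indicator simp: emeasure_eq_measure prob_space)
  also have "\<dots> \<le> expectation ?q"
    using has_bochner_integral_prob_none_below_hits[OF r1 r2] above_sets lower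
    by (intro integral_mono)
       (auto intro!: integrable_real_indicator simp: emeasure_eq_measure has_bochner_integral_iff)
  also have "\<dots> = Phi (r1 + r2)"
    using has_bochner_integral_prob_none_below_hits[OF r1 r2] by (simp add: has_bochner_integral_iff)
  finally show ?thesis by (simp add: algebra_simps)
qed

lemma Phi_lower_bound: "0 \<le> r \<Longrightarrow> 1 - exp (- (r * min_mean)) \<le> Phi r"
  by (rule exp_lower_bound_of_submult[OF Phi_0 Phi_le_1 one_minus_Phi_add_le Phi_quotient_tendsto])

end

section \<open>Approximation through countably many nodes\<close>

locale std_max_stable_Eneg = std_max_stable_process +
  fixes f :: "real \<Rightarrow> real"
  assumes Eneg01_f: "Eneg01 f"
begin

definition discont :: "real set" where
  "discont = {t\<in>{0..1}. \<not> continuous (at t within {0..1}) f}"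

definition node :: "nat \<Rightarrow> real" where
  "node = from_nat_into ((\<rat> \<inter> {0..1}) \<union> discont)"

definition inf_fZ :: "'b \<Rightarrow> real" where
  "inf_fZ \<omega> = Inf ((\<lambda>t. \<bar>f t\<bar> * Z t \<omega>) ` {0..1})"

definition min_fZ :: "nat \<Rightarrow> 'b \<Rightarrow> real" where
  "min_fZ n \<omega> = Min ((\<lambda>j. \<bar>f (node j)\<bar> * Z (node j) \<omega>) ` {..n})"

lemma finite_discont: "finite discont"
  using Eneg01_f unfolding Eneg01_def E01_def discont_def by blast

lemma f_nonpos: "t \<in> {0..1} \<Longrightarrow> f t \<le> 0"
  using Eneg01_f unfolding Eneg01_def by blast

lemma continuous_f: "t \<in> {0..1} \<Longrightarrow> t \<notin> discont \<Longrightarrow> continuous (at t within {0..1}) f"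
  by (simp add: discont_def)

lemma range_node: "range node = (\<rat> \<inter> {0..1}) \<union> discont"
  unfolding node_def
  by (intro range_from_nat_into countable_Un countable_Int1 countable_rat countable_finite
      finite_discont) auto

lemma node_in: "node k \<in> {0..1}"
  using range_node by (auto simp: discont_def)

lemma le_of_le_on_nodes:
  fixes h :: "real \<Rightarrow> real"
  assumes cont: "\<And>t. t \<in> {0..1} \<Longrightarrow> t \<notin> discont \<Longrightarrow> continuous (at t within {0..1}) h"
    and le: "\<And>k. c \<le> h (node k)" and t: "t \<in> {0..1}"
  shows "c \<le> h t"
proof (cases "t \<in> discont")
  case True
  then show ?thesis using le range_node by (metis UnI2 rangeE)
next
  case False
  show ?thesis
  proof (rule le_of_le_on_rationals_near[OF t cont[OF t False] zero_less_one])
    fix q :: real assume "q \<in> \<rat>" "q \<in> {0..1}"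
    then show "c \<le> h q" using le range_node by (metis IntI UnI1 rangeE)
  qed
qed

lemma inf_fZ_le: "\<omega> \<in> space N \<Longrightarrow> t \<in> {0..1} \<Longrightarrow> inf_fZ \<omega> \<le> \<bar>f t\<bar> * Z t \<omega>"
  unfolding inf_fZ_def by (rule cInf_lower) (auto intro!: bdd_belowI[of _ 0] simp: Z_nonneg)

lemma inf_fZ_nonneg: "\<omega> \<in> space N \<Longrightarrow> 0 \<le> inf_fZ \<omega>"
  unfolding inf_fZ_def by (rule cInf_greatest) (auto simp: Z_nonneg)

lemma inf_fZ_le_min_fZ: "\<omega> \<in> space N \<Longrightarrow> inf_fZ \<omega> \<le> min_fZ n \<omega>"
  unfolding min_fZ_def by (auto intro: inf_fZ_le node_in)

lemma min_fZ_le: "k \<le> n \<Longrightarrow> min_fZ n \<omega> \<le> \<bar>f (node k)\<bar> * Z (node k) \<omega>"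
  unfolding min_fZ_def by (rule Min_le) auto

lemma decseq_min_fZ: "decseq (\<lambda>n. min_fZ n \<omega>)"
  unfolding decseq_Suc_iff min_fZ_def by (intro allI Min_antimono image_mono) auto

lemma min_fZ_tendsto:
  assumes \<omega>: "\<omega> \<in> space N"
  shows "(\<lambda>n. min_fZ n \<omega>) \<longlonglongrightarrow> inf_fZ \<omega>"
proof -
  have bdd: "bdd_below (range (\<lambda>n. min_fZ n \<omega>))"
    using inf_fZ_le_min_fZ[OF \<omega>] by (intro bdd_belowI[of _ "inf_fZ \<omega>"]) auto
  define L where "L = (INF n. min_fZ n \<omega>)"
  have L_le: "L \<le> \<bar>f (node k)\<bar> * Z (node k) \<omega>" for k
    unfolding L_def using bdd min_fZ_le[of k k \<omega>] by (intro cINF_lower2) auto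
  have "L \<le> inf_fZ \<omega>"
    unfolding inf_fZ_def
  proof (rule cInf_greatest, simp, clarify)
    fix t :: real assume t: "t \<in> {0..1}"
    show "L \<le> \<bar>f t\<bar> * Z t \<omega>"
    proof (rule le_of_le_on_nodes[where h="\<lambda>t. \<bar>f t\<bar> * Z t \<omega>", OF _ L_le t])
      fix u assume "u \<in> {0..1}" "u \<notin> discont"
      then show "continuous (at u within {0..1}) (\<lambda>t. \<bar>f t\<bar> * Z t \<omega>)"
        using continuous_f continuous_on_Z[OF \<omega>]
        by (intro continuous_intros) (auto simp: continuous_on_eq_continuous_within)
    qed
  qed
  moreover have "inf_fZ \<omega> \<le> L"
    unfolding L_def by (rule cINF_greatest) (auto simp: inf_fZ_le_min_fZ[OF \<omega>])
  ultimately show ?thesis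
    using LIMSEQ_decseq_INF[OF bdd decseq_min_fZ] by (simp add: L_def)
qed

lemma min_fZ_measurable: "min_fZ n \<in> borel_measurable N"
proof -
  have [measurable]: "Z (node j) \<in> borel_measurable N" for j
    using integrable_Z[OF node_in] by blast
  show ?thesis unfolding min_fZ_def by measurable
qed

lemma inf_fZ_measurable: "inf_fZ \<in> borel_measurable N"
  by (rule borel_measurable_LIMSEQ_real[OF min_fZ_tendsto min_fZ_measurable])

lemma integrable_min_fZ_0: "integrable N (min_fZ 0)"
  using integrable_Z[OF node_in] by (simp add: min_fZ_def[abs_def])

lemma min_fZ_dominated: "AE \<omega> in N. norm (min_fZ n \<omega>) \<le> min_fZ 0 \<omega>"
proof (rule AE_I2)
  fix \<omega> assume \<omega>: "\<omega> \<in> space N"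
  have "min_fZ n \<omega> \<le> min_fZ 0 \<omega>" using decseq_min_fZ[of \<omega>] by (simp add: decseq_def)
  then show "norm (min_fZ n \<omega>) \<le> min_fZ 0 \<omega>"
    using order_trans[OF inf_fZ_nonneg[OF \<omega>] inf_fZ_le_min_fZ[OF \<omega>]] by simp
qed

lemma integrable_inf_fZ: "integrable N inf_fZ"
  by (rule integrable_dominated_convergence[OF inf_fZ_measurable min_fZ_measurable
      integrable_min_fZ_0 AE_I2[OF min_fZ_tendsto] min_fZ_dominated])

lemma integral_min_fZ_tendsto: "(\<lambda>n. integral\<^sup>L N (min_fZ n)) \<longlonglongrightarrow> integral\<^sup>L N inf_fZ"
  by (rule integral_dominated_convergence[OF inf_fZ_measurable min_fZ_measurable
      integrable_min_fZ_0 AE_I2[OF min_fZ_tendsto] min_fZ_dominated])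

lemma fidi_nodes: "(\<And>j. 0 \<le> c j) \<Longrightarrow> std_max_stable_fidi M \<eta> N Z node c {..n}"
  by unfold_locales (use node_in in auto)

lemma sets_above_scaled: "{\<omega>\<in>space M. \<forall>t\<in>{0..1}. s * f t < \<eta> t \<omega>} \<in> events"
  using continuous_f
  by (intro sets_Collect_strict_above[OF finite_discont eta_measurable continuous_on_eta])
     (auto intro: continuous_intros)

lemma prob_nodes_above_ge:
  assumes a: "0 \<le> a"
  shows "1 - exp (- (a * integral\<^sup>L N inf_fZ)) \<le>
         prob {\<omega>\<in>space M. \<forall>j\<le>n. a * f (node j) \<le> \<eta> (node j) \<omega>}"
proof -
  interpret fidi: std_max_stable_fidi M \<eta> N Z node "\<lambda>j. a * \<bar>f (node j)\<bar>" "{..n}"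
    by (rule fidi_nodes) (use a in simp)
  have "a * integral\<^sup>L N inf_fZ = integral\<^sup>L N (\<lambda>\<omega>. a * inf_fZ \<omega>)" by simp
  also have "\<dots> \<le> fidi.min_mean"
    unfolding fidi.min_mean_def
  proof (rule integral_mono)
    show "integrable N (\<lambda>\<omega>. a * inf_fZ \<omega>)" using integrable_inf_fZ by simp
    show "integrable N (\<lambda>\<omega>. Min ((\<lambda>j. a * \<bar>f (node j)\<bar> * Z (node j) \<omega>) ` {..n}))"
      by (intro integrable_MIN integrable_mult_right integrable_Z node_in) auto
  next
    fix \<omega> assume \<omega>: "\<omega> \<in> space N"
    show "a * inf_fZ \<omega> \<le> Min ((\<lambda>j. a * \<bar>f (node j)\<bar> * Z (node j) \<omega>) ` {..n})"
      using mult_left_mono[OF inf_fZ_le[OF \<omega> node_in] a] by (auto simp: mult.assoc)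
  qed
  finally have "1 - exp (- (a * integral\<^sup>L N inf_fZ)) \<le> 1 - exp (- (1 * fidi.min_mean))"
    by simp
  also have "\<dots> \<le> fidi.Phi 1" by (rule fidi.Phi_lower_bound) simp
  also have "\<dots> = prob (fidi.above 1)" by (rule fidi.prob_above_eq_Phi[symmetric]) simp
  also have "\<dots> \<le> prob {\<omega>\<in>space M. \<forall>j\<le>n. a * f (node j) \<le> \<eta> (node j) \<omega>}"
  proof (rule finite_measure_mono)
    have "a * f (node j) = - 1 * (a * \<bar>f (node j)\<bar>)" for j
      using f_nonpos[OF node_in] by simp
    then show "fidi.above 1 \<subseteq> {\<omega>\<in>space M. \<forall>j\<le>n. a * f (node j) \<le> \<eta> (node j) \<omega>}"
      unfolding fidi.above_def by (auto intro: less_imp_le)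
    show "{\<omega>\<in>space M. \<forall>j\<le>n. a * f (node j) \<le> \<eta> (node j) \<omega>} \<in> events"
      using eta_measurable[OF node_in] by measurable
  qed
  finally show ?thesis .
qed

text \<open>The closed conditions at the nodes only give \<eta> \<ge> a f; the slack a < s makes the
  inequality strict.\<close>
lemma prob_above_ge_of_less:
  assumes a: "0 \<le> a" "a < s" and f_neg: "\<And>t. t \<in> {0..1} \<Longrightarrow> f t < 0"
  shows "1 - exp (- (a * integral\<^sup>L N inf_fZ)) \<le> prob {\<omega>\<in>space M. \<forall>t\<in>{0..1}. s * f t < \<eta> t \<omega>}"
proof -
  define G where "G n = {\<omega>\<in>space M. \<forall>j\<le>n. a * f (node j) \<le> \<eta> (node j) \<omega>}" for n
  have G_sets: "G n \<in> events" for n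
    using eta_measurable[OF node_in] unfolding G_def by measurable
  have "decseq G" unfolding decseq_def G_def by auto
  then have lim: "(\<lambda>n. prob (G n)) \<longlonglongrightarrow> prob (\<Inter>n. G n)"
    using G_sets by (intro finite_Lim_measure_decseq) auto
  have "\<forall>n. 1 - exp (- (a * integral\<^sup>L N inf_fZ)) \<le> prob (G n)"
    unfolding G_def using prob_nodes_above_ge[OF a(1)] by blast
  then have "1 - exp (- (a * integral\<^sup>L N inf_fZ)) \<le> prob (\<Inter>n. G n)"
    by (intro tendsto_lowerbound[OF lim]) (simp_all add: always_eventually)
  also have "\<dots> \<le> prob {\<omega>\<in>space M. \<forall>t\<in>{0..1}. s * f t < \<eta> t \<omega>}"
  proof (rule finite_measure_mono[OF _ sets_above_scaled], rule subsetI)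
    fix \<omega> assume "\<omega> \<in> (\<Inter>n. G n)"
    then have \<omega>: "\<omega> \<in> space M" and nodes: "\<And>k. a * f (node k) \<le> \<eta> (node k) \<omega>"
      unfolding G_def by blast+
    have "s * f t < \<eta> t \<omega>" if t: "t \<in> {0..1}" for t
    proof -
      have "0 \<le> \<eta> t \<omega> - a * f t"
      proof (rule le_of_le_on_nodes[where h="\<lambda>t. \<eta> t \<omega> - a * f t", OF _ _ t])
        fix u assume "u \<in> {0..1}" "u \<notin> discont"
        then show "continuous (at u within {0..1}) (\<lambda>t. \<eta> t \<omega> - a * f t)"
          using continuous_f continuous_on_eta[OF \<omega>]
          by (intro continuous_intros) (auto simp: continuous_on_eq_continuous_within)
      qed (use nodes in simp)
      moreover have "s * f t < a * f t" by (rule mult_strict_right_mono_neg[OF a(2) f_neg[OF t]])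
      ultimately show ?thesis by linarith
    qed
    then show "\<omega> \<in> {\<omega>\<in>space M. \<forall>t\<in>{0..1}. s * f t < \<eta> t \<omega>}" using \<omega> by blast
  qed
  finally show ?thesis .
qed

lemma prob_above_scaled_ge:
  assumes s: "0 < s"
  shows "1 - exp (- (s * integral\<^sup>L N inf_fZ)) \<le> prob {\<omega>\<in>space M. \<forall>t\<in>{0..1}. s * f t < \<eta> t \<omega>}"
proof (cases "\<exists>t0\<in>{0..1}. f t0 = 0")
  case True
  then obtain t0 where t0: "t0 \<in> {0..1}" "f t0 = 0" by blast
  have "integral\<^sup>L N inf_fZ = integral\<^sup>L N (\<lambda>\<omega>. 0)"
    using inf_fZ_le[OF _ t0(1)] inf_fZ_nonneg t0(2)
    by (intro Bochner_Integration.integral_cong) (auto intro: antisym)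
  then show ?thesis by simp
next
  case False
  then have f_neg: "\<And>t. t \<in> {0..1} \<Longrightarrow> f t < 0" using f_nonpos by force
  have "((\<lambda>a. 1 - exp (- (a * integral\<^sup>L N inf_fZ))) \<longlongrightarrow> 1 - exp (- (s * integral\<^sup>L N inf_fZ)))
      (at_left s)"
    by (intro tendsto_intros)
  moreover have "eventually (\<lambda>a. 1 - exp (- (a * integral\<^sup>L N inf_fZ)) \<le>
      prob {\<omega>\<in>space M. \<forall>t\<in>{0..1}. s * f t < \<eta> t \<omega>}) (at_left s)"
    using eventually_at_left_real[OF s]
    by eventually_elim (auto intro!: prob_above_ge_of_less f_neg)
  ultimately show ?thesis
    by (rule tendsto_upperbound) simp
qed

lemma eventually_prob_above_quotient_less:
  assumes u: "integral\<^sup>L N inf_fZ < u"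
  shows "eventually (\<lambda>s. prob {\<omega>\<in>space M. \<forall>t\<in>{0..1}. s * f t < \<eta> t \<omega>} / s < u) (at_right 0)"
proof -
  obtain n where n: "integral\<^sup>L N (min_fZ n) < u"
    using order_tendstoD(2)[OF integral_min_fZ_tendsto u] by (auto simp: eventually_sequentially)
  interpret fidi: std_max_stable_fidi M \<eta> N Z node "\<lambda>j. \<bar>f (node j)\<bar>" "{..n}"
    by (rule fidi_nodes) simp
  have "fidi.min_mean < u" using n by (simp add: fidi.min_mean_def min_fZ_def[abs_def])
  then have "eventually (\<lambda>s. fidi.Phi s / s < u) (at_right 0)"
    by (rule order_tendstoD(2)[OF fidi.Phi_quotient_tendsto])
  then show ?thesis
    using eventually_at_right_less[of "0::real"]
  proof eventually_elim
    case (elim s)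
    have scale: "- (s * \<bar>f (node j)\<bar>) = s * f (node j)" for j
      using f_nonpos[OF node_in] by simp
    have sub: "{\<omega>\<in>space M. \<forall>t\<in>{0..1}. s * f t < \<eta> t \<omega>} \<subseteq> fidi.above s"
    proof (rule subsetI)
      fix \<omega> assume "\<omega> \<in> {\<omega>\<in>space M. \<forall>t\<in>{0..1}. s * f t < \<eta> t \<omega>}"
      then have "\<omega> \<in> space M" "\<And>j. s * f (node j) < \<eta> (node j) \<omega>" using node_in by auto
      then show "\<omega> \<in> fidi.above s" by (simp add: fidi.above_def scale)
    qed
    have "prob {\<omega>\<in>space M. \<forall>t\<in>{0..1}. s * f t < \<eta> t \<omega>} \<le> fidi.Phi s"
      using finite_measure_mono[OF sub fidi.above_sets] fidi.prob_above_eq_Phi[of s] elim by simp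
    then have "prob {\<omega>\<in>space M. \<forall>t\<in>{0..1}. s * f t < \<eta> t \<omega>} / s \<le> fidi.Phi s / s"
      by (rule divide_right_mono) (use elim in simp)
    then show ?case using elim by linarith
  qed
qed

lemma prob_above_quotient_tendsto:
  "((\<lambda>s. prob {\<omega>\<in>space M. \<forall>t\<in>{0..1}. s * f t < \<eta> t \<omega>} / s) \<longlongrightarrow> integral\<^sup>L N inf_fZ)
     (at_right 0)"
  unfolding order_tendsto_iff
proof (intro conjI allI impI)
  fix l assume "l < integral\<^sup>L N inf_fZ"
  with one_minus_exp_quotient_tendsto have
    "eventually (\<lambda>s. l < (1 - exp (- (s * integral\<^sup>L N inf_fZ))) / s) (at_right 0)"
    by (rule order_tendstoD(1))
  then show "eventually (\<lambda>s. l < prob {\<omega>\<in>space M. \<forall>t\<in>{0..1}. s * f t < \<eta> t \<omega>} / s) (at_right 0)"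
    using eventually_at_right_less[of "0::real"]
  proof eventually_elim
    case (elim s)
    have "(1 - exp (- (s * integral\<^sup>L N inf_fZ))) / s \<le>
        prob {\<omega>\<in>space M. \<forall>t\<in>{0..1}. s * f t < \<eta> t \<omega>} / s"
      by (rule divide_right_mono[OF prob_above_scaled_ge]) (use elim in auto)
    then show ?case using elim by linarith
  qed
qed (rule eventually_prob_above_quotient_less)

end

theorem mainTheorem5:
  fixes M :: "'a measure" and \<eta> :: "real \<Rightarrow> 'a \<Rightarrow> real"
    and N :: "'b measure" and Z :: "real \<Rightarrow> 'b \<Rightarrow> real"
    and f :: "real \<Rightarrow> real"
  assumes "std_max_stable M \<eta> N Z"
    and "Eneg01 f"
  shows "(measure M {\<omega>\<in>space M. \<forall>t\<in>{0..1}. \<eta> t \<omega> > f t}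
           \<ge> 1 - exp (- integral\<^sup>L N (\<lambda>\<omega>. Inf ((\<lambda>t. \<bar>f t\<bar> * Z t \<omega>) ` {0..1})))) \<and>
         ((\<lambda>s. measure M {\<omega>\<in>space M. \<forall>t\<in>{0..1}. \<eta> t \<omega> > s * f t} / s)
           \<longlongrightarrow> integral\<^sup>L N (\<lambda>\<omega>. Inf ((\<lambda>t. \<bar>f t\<bar> * Z t \<omega>) ` {0..1}))) (at_right 0)"
proof -
  interpret std_max_stable_Eneg M \<eta> N Z f
    by unfold_locales (rule assms)+
  show ?thesis
    using prob_above_scaled_ge[of 1] prob_above_quotient_tendsto
    by (simp add: inf_fZ_def[abs_def])
qed

end
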